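(* Assume the setup below, with the training loss nonincreasing along the trajectory, and let $t_0$ be a time. Suppose that for every time $t\ge t_0$ the set $\{\delta X(s,\alpha(t)):s\in T\}$ satisfies Condition A at time $t$ with constants $\Lambda\ge 1$, $\psi=1$, $0<\phi<1$ and $m_0=0$. Then for every $\varepsilon>0$ there exist $\delta>0$ and $\eta>0$ (depending only on $\Lambda,\phi,K,\varepsilon$) such that, whenever $$\nu(G_\eta(t_0))>1-\delta\quad\text{and}\quad B_{-1}(t_0)=\emptyset,$$ then for all $t\ge t_0$: $$\mathrm{acc}(t)=\nu(G_0(t))\ge 1-\varepsilon,$$ and for every $\eta^*$ with $0<\eta^*<-\log\big(3\Lambda \bar L(t_0)\big)$, $$\nu(G_{\eta^*}(t))>1-\varepsilon-\left(\tfrac34\right)^{-\frac{\log(3\Lambda \bar L(t_0))}{2\eta^*}}.$$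
   Context: Setup. Fix integers $n\ge1$, $K\ge 2$. $T\subset\mathbb R^n$ is a finite set (training set); each $s\in T$ has a class $i(s)\in\{1,\dots,K\}$ and a weight $\nu(s)\in(0,1]$ with $\sum_{s\in T}\nu(s)=1$; for $A\subset T$, $\nu(A)=\sum_{s\in A}\nu(s)$. A parametrized family of maps $X(\cdot,\alpha):\mathbb R^n\to\mathbb R^K$ is given, and the classifier is $p(s,\alpha)=\rho(X(s,\alpha))$ where $\rho$ is the softmax, $p_k(s,\alpha)=e^{X_k(s,\alpha)}/\sum_{j=1}^K e^{X_j(s,\alpha)}$. Define $\delta X(s,\alpha)=X_{i(s)}(s,\alpha)-\max_{j\ne i(s)}X_j(s,\alpha)$ and the cross-entropy loss $\bar L(\alpha)=-\sum_{s\in T}\nu(s)\log p_{i(s)}(s,\alpha)$. A training trajectory is a family of parameters $\alpha(t)$ indexed by times $t$ (e.g. nonnegative integers); write $\bar L(t)=\bar L(\alpha(t))$; "loss nonincreasing" means $\bar L(t_2)\le \bar L(t_1)$ whenever $t_2\ge t_1$. Good set of margin $\eta$: $G_\eta(t)=\{s\in T:\delta X(s,\alpha(t))>\eta\}$; bad set: $B_{-\eta}(t)=\{s\in T:\delta X(s,\alpha(t))\le-\eta\}$; accuracy $\mathrm{acc}(t)=\nu(G_0(t))$. Condition A at time $t$ with constants $\Lambda\ge1$, $m_0\ge 0$, $\psi>0$, $0<\phi<1$: letting $\beta(t)=\min_{s\in T}\delta X(s,\alpha(t))$, for $x_1\in\{0,\beta(t)\}$ and every $x_2>x_1$, $$\nu(\{s:\delta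 X(s,\alpha(t))<\tfrac{x_1+x_2}{2}\})-m_0\le \Lambda\,\nu(\{s:\delta X(s,\alpha(t))<x_1\})^{\phi}+\Lambda\,\nu(\{s:\delta X(s,\alpha(t))<x_2\})^{\psi+1}$$ (with the convention $0^\phi=0$). *)

theory Defs
  imports Complex_Main
begin

(* Points of R^n are represented as functions nat => real vanishing from index n on.
   Logit vectors X(s, alpha(t)) in R^K are functions nat => real, components 1..K used.
   The trajectory enters only through X(., alpha(t)), given as a function of time t::real. *)

definition softmax :: "nat \<Rightarrow> (nat \<Rightarrow> real) \<Rightarrow> nat \<Rightarrow> real" where
  "softmax K x k = exp (x k) / (\<Sum>j=1..K. exp (x j))"

definition margin :: "nat \<Rightarrow> (nat \<Rightarrow> real) \<Rightarrow> nat \<Rightarrow> real" where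
  "margin K x c = x c - Max (x ` ({1..K} - {c}))"

definition train_setup ::
  "nat \<Rightarrow> nat \<Rightarrow> (nat \<Rightarrow> real) set \<Rightarrow> ((nat \<Rightarrow> real) \<Rightarrow> nat) \<Rightarrow> ((nat \<Rightarrow> real) \<Rightarrow> real) \<Rightarrow> bool" where
  "train_setup n K T cls \<nu> \<longleftrightarrow> n \<ge> 1 \<and> K \<ge> 2 \<and> finite T \<and>
     (\<forall>s\<in>T. \<forall>j\<ge>n. s j = 0) \<and> (\<forall>s\<in>T. cls s \<in> {1..K}) \<and>
     (\<forall>s\<in>T. 0 < \<nu> s \<and> \<nu> s \<le> 1) \<and> sum \<nu> T = 1"

definition dX :: "nat \<Rightarrow> ((nat \<Rightarrow> real) \<Rightarrow> nat) \<Rightarrow> (real \<Rightarrow> (nat \<Rightarrow> real) \<Rightarrow> nat \<Rightarrow> real) \<Rightarrow> real \<Rightarrow> (nat \<Rightarrow> real) \<Rightarrow> real" where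
  "dX K cls X t s = margin K (X t s) (cls s)"

definition loss :: "nat \<Rightarrow> (nat \<Rightarrow> real) set \<Rightarrow> ((nat \<Rightarrow> real) \<Rightarrow> nat) \<Rightarrow> ((nat \<Rightarrow> real) \<Rightarrow> real) \<Rightarrow> (real \<Rightarrow> (nat \<Rightarrow> real) \<Rightarrow> nat \<Rightarrow> real) \<Rightarrow> real \<Rightarrow> real" where
  "loss K T cls \<nu> X t = - (\<Sum>s\<in>T. \<nu> s * ln (softmax K (X t s) (cls s)))"

definition good_set :: "nat \<Rightarrow> (nat \<Rightarrow> real) set \<Rightarrow> ((nat \<Rightarrow> real) \<Rightarrow> nat) \<Rightarrow> (real \<Rightarrow> (nat \<Rightarrow> real) \<Rightarrow> nat \<Rightarrow> real) \<Rightarrow> real \<Rightarrow> real \<Rightarrow> (nat \<Rightarrow> real) set" where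
  "good_set K T cls X \<eta> t = {s\<in>T. dX K cls X t s > \<eta>}"

(* B_{-eta}(t) *)
definition bad_set :: "nat \<Rightarrow> (nat \<Rightarrow> real) set \<Rightarrow> ((nat \<Rightarrow> real) \<Rightarrow> nat) \<Rightarrow> (real \<Rightarrow> (nat \<Rightarrow> real) \<Rightarrow> nat \<Rightarrow> real) \<Rightarrow> real \<Rightarrow> real \<Rightarrow> (nat \<Rightarrow> real) set" where
  "bad_set K T cls X \<eta> t = {s\<in>T. dX K cls X t s \<le> - \<eta>}"

(* Condition A at time t; powr satisfies 0 powr a = 0, matching the convention 0^phi = 0 *)
definition condA :: "nat \<Rightarrow> (nat \<Rightarrow> real) set \<Rightarrow> ((nat \<Rightarrow> real) \<Rightarrow> nat) \<Rightarrow> ((nat \<Rightarrow> real) \<Rightarrow> real) \<Rightarrow> (real \<Rightarrow> (nat \<Rightarrow> real) \<Rightarrow> nat \<Rightarrow> real) \<Rightarrow> real \<Rightarrow> real \<Rightarrow> real \<Rightarrow> real \<Rightarrow> real \<Rightarrow> bool" where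
  "condA K T cls \<nu> X t \<Lambda> m0 \<psi> \<phi> \<longleftrightarrow>
     (let \<beta> = Min ((dX K cls X t) ` T) in
      \<forall>x1\<in>{0, \<beta>}. \<forall>x2>x1.
        sum \<nu> {s\<in>T. dX K cls X t s < (x1 + x2) / 2} - m0
          \<le> \<Lambda> * (sum \<nu> {s\<in>T. dX K cls X t s < x1}) powr \<phi>
           + \<Lambda> * (sum \<nu> {s\<in>T. dX K cls X t s < x2}) powr (\<psi> + 1))"

end

theory Submission
  imports Defs
begin

text \<open>
  Taking \<open>x\<^sub>1 = \<beta>\<close> (the minimal margin) in Condition A and \<open>x\<^sub>2\<close> just above it, both sets
  in the inequality reduce to the set of minimisers, whose mass \<open>m\<close> therefore satisfies
  \<open>m \<le> \<Lambda> m\<^sup>2\<close>, i.e. \<open>m \<ge> 1/\<Lambda>\<close>. Hence no margin can be small: the minimisers alone carry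
  a cross-entropy of at least \<open>e\<^sup>-\<^sup>m/(2\<Lambda>)\<close> when their margin is at most \<open>m \<ge> 0\<close>. If more than
  \<open>1 - 1/\<Lambda>\<close> of the mass has margin above \<open>\<eta> = ln (3\<Lambda>K)\<close>, the minimisers are among them,
  so every margin exceeds \<open>\<eta>\<close> and the loss is below \<open>1/(3\<Lambda>)\<close>. Since the loss does not
  increase, every later margin stays positive, and even above any \<open>\<eta>\<^sup>* < -ln (3\<Lambda> L(t\<^sub>0))\<close>:
  the accuracy is in fact 1.
\<close>

lemma finite_gap_above:
  fixes b :: "'a :: {linorder, no_top}"
  assumes "finite A"
  obtains c where "b < c" "\<And>a. a \<in> A \<Longrightarrow> a < c \<Longrightarrow> a \<le> b"
proof -
  obtain u where u: "b < u" using gt_ex by blast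
  define c where "c = Min (insert u {a\<in>A. b < a})"
  have "b < c" unfolding c_def using assms u by simp
  moreover have "a \<le> b" if "a \<in> A" "a < c" for a
    using that assms unfolding c_def by (cases "b < a") auto
  ultimately show thesis using that by blast
qed

lemma minimiser_mass_lower_bound:
  fixes d \<nu> :: "'a \<Rightarrow> real"
  assumes fin: "finite T" and ne: "T \<noteq> {}" and pos: "\<And>s. s \<in> T \<Longrightarrow> 0 < \<nu> s"
    and ineq: "\<And>x2. Min (d ` T) < x2 \<Longrightarrow>
      sum \<nu> {s\<in>T. d s < (Min (d ` T) + x2) / 2} \<le> \<Lambda> * sum \<nu> {s\<in>T. d s < x2} powr (\<psi> + 1)"
  shows "1 \<le> \<Lambda> * sum \<nu> {s\<in>T. d s = Min (d ` T)} powr \<psi>"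
proof -
  define \<beta> where "\<beta> = Min (d ` T)"
  define M where "M = {s\<in>T. d s = \<beta>}"
  have \<beta>_le: "\<beta> \<le> d s" if "s \<in> T" for s unfolding \<beta>_def using fin that by simp
  obtain c where c: "\<beta> < c" "\<And>a. a \<in> d ` T \<Longrightarrow> a < c \<Longrightarrow> a \<le> \<beta>"
    using finite_gap_above fin by (metis finite_imageI)
  have below_eq_M: "{s\<in>T. d s < y} = M" if "\<beta> < y" "y \<le> c" for y
    using that c(2) \<beta>_le unfolding M_def by fastforce
  have "\<beta> \<in> d ` T" unfolding \<beta>_def using fin ne by simp
  then obtain s0 where "s0 \<in> M" unfolding M_def by auto
  then have m_pos: "0 < sum \<nu> M"
    using fin pos unfolding M_def by (intro sum_pos2[where i = s0]) (auto intro: less_imp_le)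
  have "sum \<nu> M \<le> \<Lambda> * sum \<nu> M powr (\<psi> + 1)"
    using ineq[of c] c(1) below_eq_M[of c] below_eq_M[of "(\<beta> + c) / 2"] unfolding \<beta>_def by simp
  also have "\<dots> = sum \<nu> M * (\<Lambda> * sum \<nu> M powr \<psi>)"
    using m_pos by (simp add: powr_add)
  finally show ?thesis using m_pos unfolding M_def \<beta>_def by simp
qed

lemma train_setupD:
  assumes "train_setup n K T cls \<nu>"
  shows "finite T" "T \<noteq> {}" "\<And>s. s \<in> T \<Longrightarrow> 0 < \<nu> s" "\<And>s. s \<in> T \<Longrightarrow> cls s \<in> {1..K}"
    "2 \<le> K" "sum \<nu> T = 1"
  using assms unfolding train_setup_def by auto

lemma condA_minimiser_mass:
  assumes ts: "train_setup n K T cls \<nu>" and cA: "condA K T cls \<nu> X t \<Lambda> 0 1 \<phi>"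
  shows "0 < \<Lambda>" "1 / \<Lambda> \<le> sum \<nu> {s\<in>T. dX K cls X t s = Min (dX K cls X t ` T)}"
proof -
  let ?d = "dX K cls X t"
  let ?M = "{s\<in>T. ?d s = Min (?d ` T)}"
  note T = train_setupD[OF ts]
  have none_below: "{s\<in>T. ?d s < Min (?d ` T)} = {}" using T(1) by (auto simp: not_less)
  have mass_nonneg: "0 \<le> sum \<nu> ?M" using T(3) by (intro sum_nonneg) (simp add: less_imp_le)
  have "1 \<le> \<Lambda> * sum \<nu> ?M powr 1"
  proof (rule minimiser_mass_lower_bound)
    show "sum \<nu> {s\<in>T. ?d s < (Min (?d ` T) + x2) / 2} \<le> \<Lambda> * sum \<nu> {s\<in>T. ?d s < x2} powr (1 + 1)"
      if "Min (?d ` T) < x2" for x2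
      using cA that unfolding condA_def Let_def by (simp add: none_below add.commute)
  qed (use T in auto)
  then have mass: "1 \<le> \<Lambda> * sum \<nu> ?M" using mass_nonneg by simp
  with mass_nonneg show "0 < \<Lambda>" by (smt (verit) mult_nonpos_nonneg)
  with mass show "1 / \<Lambda> \<le> sum \<nu> ?M" by (simp add: divide_le_eq mult.commute)
qed

lemma softmax_pos_le_one:
  assumes "c \<in> {1..K}"
  shows "0 < softmax K x c" "softmax K x c \<le> 1"
proof -
  have "exp (x c) \<le> (\<Sum>j=1..K. exp (x j))"
    using assms by (intro member_le_sum) auto
  moreover have "0 < (\<Sum>j=1..K. exp (x j))"
    using assms by (intro sum_pos) auto
  ultimately show "0 < softmax K x c" "softmax K x c \<le> 1" unfolding softmax_def by auto
qed

lemma inverse_softmax_eq: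
  assumes "c \<in> {1..K}"
  shows "1 / softmax K x c = 1 + (\<Sum>j\<in>{1..K} - {c}. exp (x j - x c))"
proof -
  have "(\<Sum>j=1..K. exp (x j)) = exp (x c) + (\<Sum>j\<in>{1..K} - {c}. exp (x j))"
    using assms by (simp add: sum.remove)
  then show ?thesis
    unfolding softmax_def by (simp add: exp_diff add_divide_distrib sum_divide_distrib)
qed

lemma neg_ln_softmax_le:
  assumes c: "c \<in> {1..K}" and e: "e \<le> margin K x c"
  shows "- ln (softmax K x c) \<le> (real K - 1) * exp (- e)"
proof -
  let ?A = "{1..K} - {c}"
  have "x j - x c \<le> - e" if "j \<in> ?A" for j
  proof -
    have "x j \<le> Max (x ` ?A)" using that by (intro Max_ge) auto
    then show ?thesis using e unfolding margin_def by linarith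
  qed
  then have "(\<Sum>j\<in>?A. exp (x j - x c)) \<le> (\<Sum>j\<in>?A. exp (- e))"
    by (intro sum_mono) simp
  also have "\<dots> = (real K - 1) * exp (- e)"
    using c by (simp add: of_nat_diff)
  finally have "1 / softmax K x c \<le> 1 + (real K - 1) * exp (- e)"
    using inverse_softmax_eq[OF c] by simp
  moreover have "- ln (softmax K x c) \<le> 1 / softmax K x c - 1"
    using ln_le_minus_one[of "1 / softmax K x c"] softmax_pos_le_one(1)[OF c, of x] by (simp add: ln_div)
  ultimately show ?thesis by linarith
qed

lemma neg_ln_softmax_ge:
  assumes c: "c \<in> {1..K}" and K: "2 \<le> K" and m: "margin K x c \<le> m" "0 \<le> m"
  shows "exp (- m) / 2 \<le> - ln (softmax K x c)"
proof -
  let ?A = "{1..K} - {c}"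
  have "(if c = 1 then 2 else 1) \<in> ?A" using c K by auto
  then have "Max (x ` ?A) \<in> x ` ?A" by (intro Max_in) auto
  then obtain j where j: "j \<in> ?A" "x j = Max (x ` ?A)" by (metis imageE)
  have "exp (- m) \<le> exp (x j - x c)" using j m(1) unfolding margin_def by simp
  also have "\<dots> \<le> (\<Sum>i\<in>?A. exp (x i - x c))" using j(1) by (intro member_le_sum) auto
  finally have "1 + exp (- m) \<le> 1 / softmax K x c" using inverse_softmax_eq[OF c] by simp
  then have "softmax K x c \<le> 1 / (1 + exp (- m))"
    using softmax_pos_le_one(1)[OF c, of x] add_pos_pos[OF zero_less_one exp_gt_zero, of "- m"]
    by (simp add: field_simps)
  moreover have "y / 2 \<le> 1 - 1 / (1 + y)" if "0 \<le> y" "y \<le> 1" for y :: real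
    using that mult_left_le[of y y] by (simp add: field_simps)
  then have "exp (- m) / 2 \<le> 1 - 1 / (1 + exp (- m))" using m(2) by simp
  moreover have "ln (softmax K x c) \<le> softmax K x c - 1"
    using softmax_pos_le_one(1)[OF c, of x] by (rule ln_le_minus_one)
  ultimately show ?thesis by linarith
qed

lemma neg_ln_softmax_nonneg:
  assumes "c \<in> {1..K}"
  shows "0 \<le> - ln (softmax K x c)"
  using softmax_pos_le_one[OF assms, of x] by simp

lemma loss_eq_weighted_sum:
  "loss K T cls \<nu> X t = (\<Sum>s\<in>T. \<nu> s * - ln (softmax K (X t s) (cls s)))"
  unfolding loss_def by (simp add: sum_negf)

lemma loss_nonneg:
  assumes "train_setup n K T cls \<nu>"
  shows "0 \<le> loss K T cls \<nu> X t"
  unfolding loss_eq_weighted_sum using train_setupD[OF assms]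
  by (intro sum_nonneg mult_nonneg_nonneg neg_ln_softmax_nonneg) (auto intro: less_imp_le)

lemma loss_le_of_margins_ge:
  assumes ts: "train_setup n K T cls \<nu>" and e: "\<And>s. s \<in> T \<Longrightarrow> e \<le> dX K cls X t s"
  shows "loss K T cls \<nu> X t \<le> (real K - 1) * exp (- e)"
proof -
  note T = train_setupD[OF ts]
  have "loss K T cls \<nu> X t \<le> (\<Sum>s\<in>T. \<nu> s * ((real K - 1) * exp (- e)))"
    unfolding loss_eq_weighted_sum using T(3,4) e
    by (intro sum_mono mult_left_mono neg_ln_softmax_le) (auto simp: dX_def less_imp_le)
  also have "\<dots> = (real K - 1) * exp (- e)" using T(6) by (simp add: sum_distrib_right[symmetric])
  finally show ?thesis .
qed

lemma margins_gt_of_loss_lt: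
  assumes ts: "train_setup n K T cls \<nu>" and cA: "condA K T cls \<nu> X t \<Lambda> 0 1 \<phi>"
    and m: "0 \<le> m" and small: "2 * \<Lambda> * loss K T cls \<nu> X t < exp (- m)" and s: "s \<in> T"
  shows "m < dX K cls X t s"
proof (rule ccontr)
  note T = train_setupD[OF ts]
  let ?d = "dX K cls X t"
  let ?M = "{s\<in>T. ?d s = Min (?d ` T)}"
  assume "\<not> m < ?d s"
  moreover have "Min (?d ` T) \<le> ?d s" using T(1) s by simp
  ultimately have min_le: "Min (?d ` T) \<le> m" by linarith
  have "sum \<nu> ?M * (exp (- m) / 2) = (\<Sum>s\<in>?M. \<nu> s * (exp (- m) / 2))"
    by (rule sum_distrib_right)
  also have "\<dots> \<le> (\<Sum>s\<in>?M. \<nu> s * - ln (softmax K (X t s) (cls s)))"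
    using T(3,4,5) min_le m
    by (intro sum_mono mult_left_mono neg_ln_softmax_ge) (auto simp: dX_def less_imp_le)
  also have "\<dots> \<le> loss K T cls \<nu> X t"
    unfolding loss_eq_weighted_sum using T(1,3,4)
    by (intro sum_mono2 mult_nonneg_nonneg neg_ln_softmax_nonneg) (auto intro: less_imp_le)
  finally have "sum \<nu> ?M * exp (- m) \<le> 2 * loss K T cls \<nu> X t" by simp
  moreover have "exp (- m) / \<Lambda> \<le> sum \<nu> ?M * exp (- m)"
    using mult_right_mono[OF condA_minimiser_mass(2)[OF ts cA], of "exp (- m)"] by simp
  ultimately have "exp (- m) / \<Lambda> \<le> 2 * loss K T cls \<nu> X t" by linarith
  then show False
    using small condA_minimiser_mass(1)[OF ts cA] by (simp add: pos_divide_le_eq algebra_simps)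
qed

lemma margins_gt_of_good_mass:
  assumes ts: "train_setup n K T cls \<nu>" and cA: "condA K T cls \<nu> X t \<Lambda> 0 1 \<phi>"
    and good: "1 - 1 / \<Lambda> < sum \<nu> (good_set K T cls X \<eta> t)" and s: "s \<in> T"
  shows "\<eta> < dX K cls X t s"
proof (rule ccontr)
  note T = train_setupD[OF ts]
  let ?d = "dX K cls X t"
  let ?M = "{s\<in>T. ?d s = Min (?d ` T)}"
  assume "\<not> \<eta> < ?d s"
  moreover have "Min (?d ` T) \<le> ?d s" using T(1) s by simp
  ultimately have "good_set K T cls X \<eta> t \<subseteq> T - ?M" unfolding good_set_def by auto
  then have "sum \<nu> (good_set K T cls X \<eta> t) \<le> sum \<nu> (T - ?M)"
    using T(1,3) by (intro sum_mono2) (auto intro: less_imp_le)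
  also have "\<dots> = 1 - sum \<nu> ?M" using T(1,6) by (subst sum_diff) auto
  finally show False using good condA_minimiser_mass(2)[OF ts cA] by linarith
qed

lemma lt_exp_neg_if_lt_neg_ln:
  fixes x y :: real
  assumes "y < - ln x"
  shows "x < exp (- y)"
proof (cases "0 < x")
  case True
  then have "x = exp (ln x)" by simp
  also have "\<dots> < exp (- y)" using assms by simp
  finally show ?thesis .
qed (use exp_gt_zero[of "- y"] in linarith)

lemma good_sets_full_after:
  assumes ts: "train_setup n K T cls \<nu>"
    and mono: "\<And>t1 t2. t1 \<le> t2 \<Longrightarrow> loss K T cls \<nu> X t2 \<le> loss K T cls \<nu> X t1"
    and cA: "\<And>t. t0 \<le> t \<Longrightarrow> condA K T cls \<nu> X t \<Lambda> 0 1 \<phi>"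
    and good: "1 - 1 / \<Lambda> < sum \<nu> (good_set K T cls X (ln (3 * \<Lambda> * real K)) t0)"
    and t: "t0 \<le> t"
  shows "good_set K T cls X 0 t = T"
    and "0 < \<eta>s \<Longrightarrow> \<eta>s < - ln (3 * \<Lambda> * loss K T cls \<nu> X t0) \<Longrightarrow> good_set K T cls X \<eta>s t = T"
proof -
  note T = train_setupD[OF ts]
  let ?L = "loss K T cls \<nu> X"
  have \<Lambda>: "0 < \<Lambda>" using condA_minimiser_mass(1)[OF ts cA[OF order_refl]] .
  have "?L t0 \<le> (real K - 1) * exp (- ln (3 * \<Lambda> * real K))"
    using margins_gt_of_good_mass[OF ts cA good]
    by (intro loss_le_of_margins_ge[OF ts]) (auto intro: less_imp_le)
  also have "\<dots> = (real K - 1) / (3 * \<Lambda> * real K)"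
    using \<Lambda> T(5) by (simp only: exp_minus exp_ln divide_inverse) simp
  also have "\<dots> < 1 / (3 * \<Lambda>)"
    using \<Lambda> T(5) by (simp add: field_simps)
  finally have initial: "3 * \<Lambda> * ?L t0 < 1" using \<Lambda> by (simp add: field_simps)
  have full: "good_set K T cls X m t = T" if "0 \<le> m" "3 * \<Lambda> * ?L t0 < exp (- m)" for m
  proof -
    have "2 * \<Lambda> * ?L t \<le> 3 * \<Lambda> * ?L t0"
      using mono[OF t] loss_nonneg[OF ts, of X t] \<Lambda> by (simp add: mult_left_mono)
    then show ?thesis
      using margins_gt_of_loss_lt[OF ts cA[OF t] \<open>0 \<le> m\<close>] that(2) unfolding good_set_def by auto
  qed
  show "good_set K T cls X 0 t = T" using full initial by simp
  show "good_set K T cls X \<eta>s t = T" if "0 < \<eta>s" "\<eta>s < - ln (3 * \<Lambda> * ?L t0)"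
    using full lt_exp_neg_if_lt_neg_ln that by simp
qed

theorem theorem1:
  fixes \<Lambda> \<phi> \<epsilon> :: real and K :: nat
  assumes "\<Lambda> \<ge> 1" and "0 < \<phi>" and "\<phi> < 1" and "K \<ge> 2" and "\<epsilon> > 0"
  shows "\<exists>\<delta>>0. \<exists>\<eta>>0. \<forall>(n::nat) (T :: (nat \<Rightarrow> real) set) cls \<nu>
           (X :: real \<Rightarrow> (nat \<Rightarrow> real) \<Rightarrow> nat \<Rightarrow> real) (t0::real).
     train_setup n K T cls \<nu> \<longrightarrow>
     (\<forall>t1 t2. t1 \<le> t2 \<longrightarrow> loss K T cls \<nu> X t2 \<le> loss K T cls \<nu> X t1) \<longrightarrow>
     (\<forall>t\<ge>t0. condA K T cls \<nu> X t \<Lambda> 0 1 \<phi>) \<longrightarrow>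
     sum \<nu> (good_set K T cls X \<eta> t0) > 1 - \<delta> \<longrightarrow>
     bad_set K T cls X 1 t0 = {} \<longrightarrow>
     (\<forall>t\<ge>t0. sum \<nu> (good_set K T cls X 0 t) \<ge> 1 - \<epsilon> \<and>
        (\<forall>\<eta>s. 0 < \<eta>s \<and> \<eta>s < - ln (3 * \<Lambda> * loss K T cls \<nu> X t0) \<longrightarrow>
           sum \<nu> (good_set K T cls X \<eta>s t) >
             1 - \<epsilon> - (3/4) powr (- ln (3 * \<Lambda> * loss K T cls \<nu> X t0) / (2 * \<eta>s))))"
proof -
  have \<delta>: "0 < 1 / \<Lambda>" using assms(1) by simp
  have "6 \<le> 3 * \<Lambda> * real K" using mult_mono[of 3 "3 * \<Lambda>" 2 "real K"] assms(1,4) by simp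
  then have \<eta>: "0 < ln (3 * \<Lambda> * real K)" by simp
  show ?thesis
    apply (rule exI[of _ "1 / \<Lambda>"], rule conjI[OF \<delta>])
    apply (rule exI[of _ "ln (3 * \<Lambda> * real K)"], rule conjI[OF \<eta>])
    apply (intro allI impI conjI)
    subgoal premises prems for n T cls \<nu> X t0 t
      using good_sets_full_after(1)[OF prems(1) prems(2,3)[rule_format] prems(4,6)]
        train_setupD(6)[OF prems(1)] assms(5) by simp
    subgoal premises prems for n T cls \<nu> X t0 t \<eta>s
      using good_sets_full_after(2)[OF prems(1) prems(2,3)[rule_format] prems(4,6) prems(7)[THEN conjunct1]
          prems(7)[THEN conjunct2]]
        train_setupD(6)[OF prems(1)] assms(5) by simp (rule less_trans[of _ 0], simp_all)
    done
qed

end
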